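(* In the qubit–battery model with the "copy" interaction $$U_{SB}=|0\rangle\langle0|_S\otimes|0\rangle\langle0|_B+\sum_{n\ge1}\sum_{i,j\in\{0,1\}}V_{ij}\,|i\rangle\langle j|_S\otimes|n-i\rangle\langle n-j|_B,$$ for every normalized battery state $|\beta\rangle_B=\sum_{n\ge0}\beta_n|n\rangle_B$ one has $$\epsilon_C(\mathbf\Phi_{|\beta\rangle},\mathcal V)=|V_{01}|^2\sum_{n=1}^\infty\Big[|\beta_{n+1}-\beta_n|^2-\frac{|V_{01}|^2}{4}|\beta_{n+1}+\beta_{n-1}-2\beta_n|^2\Big]+\Delta(\beta_0,\beta_1,V_S),$$ where $$\Delta(\beta_0,\beta_1,V_S)=|\beta_0|^2+|V_{01}|^2\big(|\beta_1|^2-\mathrm{Re}[\beta_0\beta_1^*]\big)-\frac14\big|\beta_0(V_{00}^*+|V_{11}|^2)+\beta_1|V_{01}|^2\big|^2 .$$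
   Context: Qubit $S$ with energy basis $|0\rangle_S,|1\rangle_S$, $H_S=\frac\omega2(|1\rangle\langle1|-|0\rangle\langle0|)$; harmonic-oscillator battery $B$ with basis $\{|n\rangle_B\}_{n\ge0}$, $H_B=\omega\sum_n n|n\rangle\langle n|$. $V_S$ is a qubit unitary with entries $V_{ij}=\langle i|V_S|j\rangle$, $\mathcal V(\cdot)=V_S\cdot V_S^\dagger$. The channel is $\mathbf\Phi_{|\beta\rangle}(\rho)=\mathrm{Tr}_B[U_{SB}(\rho\otimes|\beta\rangle\langle\beta|_B)U_{SB}^\dagger]$ with Kraus operators $K^{(n)}={}_B\langle n|U_{SB}|\beta\rangle_B$, and the Choi infidelity is $\epsilon_C(\mathbf\Phi,\mathcal V)=1-\frac14\sum_n|\mathrm{Tr}[V_S^\dagger K^{(n)}]|^2$ (equivalently $1-F$ of the Choi states, $F$ the Uhlmann fidelity). *)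

theory Defs
  imports "HOL-Analysis.Analysis"
begin

text \<open>Qubit operators: functions nat => nat => complex, only indices 0 and 1 used
  (0 = ground state, 1 = excited state).
  Operators on S (x) B are given by their matrix elements
  U (i,m) (j,k) = <i|<m| U |j>|k>.\<close>

definition qubit_unitary :: "(nat \<Rightarrow> nat \<Rightarrow> complex) \<Rightarrow> bool" where
  "qubit_unitary V \<longleftrightarrow>
     (\<forall>i\<in>{0,1}. \<forall>j\<in>{0,1}. (\<Sum>k\<in>{0,1}. cnj (V k i) * V k j) = (if i = j then 1 else 0))"

definition copyU :: "(nat \<Rightarrow> nat \<Rightarrow> complex) \<Rightarrow> nat \<times> nat \<Rightarrow> nat \<times> nat \<Rightarrow> complex" where
  "copyU V = (\<lambda>(i, m) (j, k).
      (if i = 0 \<and> j = 0 \<and> m = 0 \<and> k = 0 then 1 else 0)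
      + (\<Sum>\<^sub>\<infinity>n\<in>{1..}. V i j * (if m = n - i \<and> k = n - j then 1 else 0)))"

text \<open>Kraus operators K^(n) = <n|_B U |beta>_B, as qubit matrices.\<close>
definition kraus :: "(nat \<times> nat \<Rightarrow> nat \<times> nat \<Rightarrow> complex) \<Rightarrow> (nat \<Rightarrow> complex) \<Rightarrow> nat
                     \<Rightarrow> nat \<Rightarrow> nat \<Rightarrow> complex" where
  "kraus U \<beta> n i j = (\<Sum>\<^sub>\<infinity>k. U (i, n) (j, k) * \<beta> k)"

definition tr_adj_mult :: "(nat \<Rightarrow> nat \<Rightarrow> complex) \<Rightarrow> (nat \<Rightarrow> nat \<Rightarrow> complex) \<Rightarrow> complex" where
  "tr_adj_mult V K = (\<Sum>i\<in>{0,1}. \<Sum>j\<in>{0,1}. cnj (V j i) * K j i)"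

definition choi_infidelity ::
  "(nat \<Rightarrow> nat \<Rightarrow> nat \<Rightarrow> complex) \<Rightarrow> (nat \<Rightarrow> nat \<Rightarrow> complex) \<Rightarrow> real" where
  "choi_infidelity K V = 1 - (1/4) * (\<Sum>\<^sub>\<infinity>n. (cmod (tr_adj_mult V (K n)))^2)"

definition Delta :: "complex \<Rightarrow> complex \<Rightarrow> (nat \<Rightarrow> nat \<Rightarrow> complex) \<Rightarrow> real" where
  "Delta b0 b1 V = (cmod b0)^2 + (cmod (V 0 1))^2 * ((cmod b1)^2 - Re (b0 * cnj b1))
      - (1/4) * (cmod (b0 * (cnj (V 0 0) + complex_of_real ((cmod (V 1 1))^2))
                       + b1 * complex_of_real ((cmod (V 0 1))^2)))^2"

end

theory Submission
  imports Defs
begin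

(* For n >= 1 the Kraus operator K^(n) has entries V_ij beta_(n+i-j), so by unitarity
   Tr[V^dagger K^(n)] = 2 (1 - c) beta_n + c (beta_(n-1) + beta_(n+1)) with c = |V_01|^2.
   Expanding, |Tr[V^dagger K^(n)]|^2 / 4 equals |beta_n|^2, minus c times the n-th summand of the
   formula, minus c times the two telescoping differences |beta_n|^2 - |beta_(n+1)|^2 and
   Re (beta_n beta_(n+1)^* ) - Re (beta_(n-1) beta_n^* ). Summing over n >= 1 using the normalisation
   and adding the n = 0 term gives the formula; square summability of beta makes all the series
   involved absolutely convergent. *)

lemma infsum_eq_single:
  fixes f :: "'a \<Rightarrow> 'b::{comm_monoid_add,t2_space}"
  assumes "x \<in> A" "\<And>y. y \<in> A \<Longrightarrow> y \<noteq> x \<Longrightarrow> f y = 0"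
  shows "infsum f A = f x"
  by (rule infsumI, rule has_sum_finite_neutralI[of "{x}"]) (use assms in auto)

lemma infsum_atLeast_1_eq_suminf:
  fixes f :: "nat \<Rightarrow> 'a::banach"
  assumes "summable (\<lambda>m. norm (f (Suc m)))"
  shows "(\<Sum>\<^sub>\<infinity>n\<in>{1..}. f n) = (\<Sum>m. f (Suc m))"
proof -
  have "{1..} = range Suc"
    by (auto simp: image_iff dest!: Suc_le_D)
  then have "(\<Sum>\<^sub>\<infinity>n\<in>{1..}. f n) = (\<Sum>\<^sub>\<infinity>m. f (Suc m))"
    by (simp add: infsum_reindex o_def)
  also have "\<dots> = (\<Sum>m. f (Suc m))"
    using assms by (intro infsumI norm_summable_imp_has_sum summable_sums[OF summable_norm_cancel])
  finally show ?thesis .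
qed

definition square_summable :: "(nat \<Rightarrow> 'a::real_normed_vector) \<Rightarrow> bool" where
  "square_summable x \<longleftrightarrow> summable (\<lambda>n. (norm (x n))\<^sup>2)"

lemma square_summable_add:
  assumes "square_summable x" "square_summable y"
  shows "square_summable (\<lambda>n. x n + y n)"
  unfolding square_summable_def
proof (rule summable_comparison_test')
  show "summable (\<lambda>n. 2 * (norm (x n))\<^sup>2 + 2 * (norm (y n))\<^sup>2)"
    using assms unfolding square_summable_def by (intro summable_add summable_mult)
  fix n
  have "(norm (x n + y n))\<^sup>2 \<le> (norm (x n) + norm (y n))\<^sup>2"
    by (simp add: norm_triangle_ineq power_mono)
  also have "\<dots> \<le> 2 * (norm (x n))\<^sup>2 + 2 * (norm (y n))\<^sup>2"
    using sum_squares_bound[of "norm (x n)" "norm (y n)"] by (simp add: power2_sum)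
  finally show "norm ((norm (x n + y n))\<^sup>2) \<le> 2 * (norm (x n))\<^sup>2 + 2 * (norm (y n))\<^sup>2"
    by simp
qed

lemma square_summable_mult:
  fixes x :: "nat \<Rightarrow> 'a::real_normed_div_algebra"
  assumes "square_summable x"
  shows "square_summable (\<lambda>n. c * x n)"
  using summable_mult[OF assms[unfolded square_summable_def], of "(norm c)\<^sup>2"]
  unfolding square_summable_def by (simp add: norm_mult power_mult_distrib)

lemma square_summable_diff:
  assumes "square_summable x" "square_summable y"
  shows "square_summable (\<lambda>n. x n - y n)"
proof -
  have "square_summable (\<lambda>n. - y n)"
    using assms(2) unfolding square_summable_def by simp
  from square_summable_add[OF assms(1) this] show ?thesis
    by simp
qed

lemma square_summable_Suc:
  assumes "square_summable x"
  shows "square_summable (\<lambda>n. x (Suc n))"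
  using assms summable_Suc_iff[of "\<lambda>n. (norm (x n))\<^sup>2"] unfolding square_summable_def by simp

lemma square_summable_LIMSEQ_zero:
  assumes "square_summable x"
  shows "x \<longlonglongrightarrow> 0"
proof -
  have "(\<lambda>n. (norm (x n))\<^sup>2) \<longlonglongrightarrow> 0"
    using assms unfolding square_summable_def by (rule summable_LIMSEQ_zero)
  from tendsto_real_sqrt[OF this] have "(\<lambda>n. norm (x n)) \<longlonglongrightarrow> 0"
    by simp
  then show ?thesis
    by (simp add: tendsto_norm_zero_iff)
qed

definition finite_difference_term :: "real \<Rightarrow> (nat \<Rightarrow> complex) \<Rightarrow> nat \<Rightarrow> real" where
  "finite_difference_term c \<beta> n =
     (cmod (\<beta> (n+1) - \<beta> n))\<^sup>2 - c / 4 * (cmod (\<beta> (n+1) + \<beta> (n-1) - 2 * \<beta> n))\<^sup>2"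

lemma summable_finite_difference_term:
  assumes "square_summable \<beta>"
  shows "summable (\<lambda>m. norm (finite_difference_term c \<beta> (Suc m)))"
proof -
  define d1 d2 where "d1 m = \<beta> (Suc (Suc m)) - \<beta> (Suc m)"
    and "d2 m = \<beta> (Suc (Suc m)) + \<beta> m - 2 * \<beta> (Suc m)" for m
  have shift1: "square_summable (\<lambda>m. \<beta> (Suc m))"
    and shift2: "square_summable (\<lambda>m. \<beta> (Suc (Suc m)))"
    using square_summable_Suc[OF assms] square_summable_Suc[OF square_summable_Suc[OF assms]] .
  have "square_summable d1" "square_summable d2"
    unfolding d1_def d2_def
    by (intro square_summable_add square_summable_diff square_summable_mult assms shift1 shift2)+
  then have majorant: "summable (\<lambda>m. (cmod (d1 m))\<^sup>2 + \<bar>c / 4\<bar> * (cmod (d2 m))\<^sup>2)"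
    unfolding square_summable_def by (intro summable_add summable_mult)
  have bound: "norm (finite_difference_term c \<beta> (Suc m))
      \<le> (cmod (d1 m))\<^sup>2 + \<bar>c / 4\<bar> * (cmod (d2 m))\<^sup>2" for m
    using abs_triangle_ineq4[of "(cmod (d1 m))\<^sup>2" "c / 4 * (cmod (d2 m))\<^sup>2"]
    by (simp add: finite_difference_term_def d1_def d2_def abs_mult)
  show ?thesis
    using majorant by (rule summable_comparison_test') (use bound in simp)
qed

lemma infsum_finite_difference_term:
  assumes "square_summable \<beta>"
  shows "(\<Sum>\<^sub>\<infinity>n\<in>{1..}. finite_difference_term c \<beta> n) =
    (\<Sum>m. finite_difference_term c \<beta> (Suc m))"
  using assms by (intro infsum_atLeast_1_eq_suminf summable_finite_difference_term)

lemma copyU_entry: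
  assumes "i \<le> 1"
  shows "copyU V (i, n) (j, k) = (if i = 0 \<and> j = 0 \<and> n = 0 \<and> k = 0 then 1 else 0)
      + (if 1 \<le> n + i \<and> k = n + i - j then V i j else 0)"
proof (cases "1 \<le> n + i")
  case True
  have "(\<Sum>\<^sub>\<infinity>n'\<in>{1..}. V i j * (if n = n' - i \<and> k = n' - j then 1 else 0))
      = V i j * (if n = (n + i) - i \<and> k = (n + i) - j then 1 else 0)"
    by (rule infsum_eq_single) (use True assms in auto)
  then show ?thesis
    using True unfolding copyU_def by auto
next
  case False
  have "(\<Sum>\<^sub>\<infinity>n'\<in>{1..}. V i j * (if n = n' - i \<and> k = n' - j then 1 else (0::complex)))
      = 0"
    by (rule infsum_0) (use False assms in auto)
  then show ?thesis
    using False unfolding copyU_def by auto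
qed

lemma kraus_copyU:
  assumes "i \<le> 1" "j \<le> 1"
  shows "kraus (copyU V) \<beta> n i j =
    (if 1 \<le> n + i then V i j * \<beta> (n + i - j) else if j = 0 then \<beta> 0 else 0)"
proof (cases "1 \<le> n + i")
  case True
  then show ?thesis
    unfolding kraus_def
    by (subst infsum_eq_single[of "n + i - j"]) (use assms in \<open>auto simp: copyU_entry\<close>)
next
  case False
  then show ?thesis
    unfolding kraus_def
    by (subst infsum_eq_single[of 0]) (use assms in \<open>auto simp: copyU_entry\<close>)
qed

lemma cnj_mult_self: "cnj z * z = complex_of_real ((cmod z)\<^sup>2)"
  by (metis complex_norm_square mult.commute of_real_power)

lemma qubit_unitary_norms:
  assumes "qubit_unitary V"
  shows "(cmod (V 0 0))\<^sup>2 = 1 - (cmod (V 0 1))\<^sup>2" "(cmod (V 1 1))\<^sup>2 = 1 - (cmod (V 0 1))\<^sup>2"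
    "(cmod (V 1 0))\<^sup>2 = (cmod (V 0 1))\<^sup>2"
proof -
  have col0: "cnj (V 0 0) * V 0 0 + cnj (V 1 0) * V 1 0 = 1"
    and col1: "cnj (V 0 1) * V 0 1 + cnj (V 1 1) * V 1 1 = 1"
    and orth: "cnj (V 0 0) * V 0 1 + cnj (V 1 0) * V 1 1 = 0"
    using assms by (simp_all add: qubit_unitary_def)
  have "complex_of_real ((cmod (V 0 0))\<^sup>2 + (cmod (V 1 0))\<^sup>2) = 1"
    using col0 by (simp add: cnj_mult_self)
  then have norm_col0: "(cmod (V 0 0))\<^sup>2 = 1 - (cmod (V 1 0))\<^sup>2"
    by (simp only: of_real_eq_1_iff eq_diff_eq)
  have "complex_of_real ((cmod (V 0 1))\<^sup>2 + (cmod (V 1 1))\<^sup>2) = 1"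
    using col1 by (simp add: cnj_mult_self)
  then show norm_col1: "(cmod (V 1 1))\<^sup>2 = 1 - (cmod (V 0 1))\<^sup>2"
    by (simp only: of_real_eq_1_iff eq_diff_eq add.commute)
  have "cnj (V 0 0) * V 0 1 = - (cnj (V 1 0) * V 1 1)"
    using orth by (simp add: eq_neg_iff_add_eq_0)
  then have "cmod (cnj (V 0 0) * V 0 1) = cmod (cnj (V 1 0) * V 1 1)"
    by (metis norm_minus_cancel)
  then have "(cmod (V 0 0))\<^sup>2 * (cmod (V 0 1))\<^sup>2 = (cmod (V 1 0))\<^sup>2 * (cmod (V 1 1))\<^sup>2"
    by (simp add: norm_mult flip: power_mult_distrib)
  then have "(1 - (cmod (V 1 0))\<^sup>2) * (cmod (V 0 1))\<^sup>2 = (cmod (V 1 0))\<^sup>2 * (1 - (cmod (V 0 1))\<^sup>2)"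
    by (simp only: norm_col0 norm_col1)
  then show "(cmod (V 1 0))\<^sup>2 = (cmod (V 0 1))\<^sup>2"
    by (simp add: algebra_simps)
  then show "(cmod (V 0 0))\<^sup>2 = 1 - (cmod (V 0 1))\<^sup>2"
    using norm_col0 by simp
qed

lemma tr_adj_mult_kraus_copyU_Suc:
  assumes "qubit_unitary V"
  defines "c \<equiv> (cmod (V 0 1))\<^sup>2"
  shows "tr_adj_mult V (kraus (copyU V) \<beta> (Suc m)) =
    of_real (2 * (1 - c)) * \<beta> (Suc m) + of_real c * (\<beta> m + \<beta> (Suc (Suc m)))"
proof -
  have "tr_adj_mult V (kraus (copyU V) \<beta> (Suc m)) =
      cnj (V 0 0) * V 0 0 * \<beta> (Suc m) + cnj (V 1 0) * V 1 0 * \<beta> (Suc (Suc m))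
      + cnj (V 0 1) * V 0 1 * \<beta> m + cnj (V 1 1) * V 1 1 * \<beta> (Suc m)"
    unfolding tr_adj_mult_def by (simp add: kraus_copyU algebra_simps)
  also have "\<dots> = of_real (1 - c) * \<beta> (Suc m) + of_real c * \<beta> (Suc (Suc m))
      + of_real c * \<beta> m + of_real (1 - c) * \<beta> (Suc m)"
    unfolding cnj_mult_self qubit_unitary_norms[OF assms(1)] c_def ..
  finally show ?thesis
    by (simp add: algebra_simps)
qed

lemma tr_adj_mult_kraus_copyU_0:
  assumes "qubit_unitary V"
  shows "tr_adj_mult V (kraus (copyU V) \<beta> 0) =
    \<beta> 0 * (cnj (V 0 0) + complex_of_real ((cmod (V 1 1))\<^sup>2)) + \<beta> 1 * complex_of_real ((cmod (V 0 1))\<^sup>2)"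
proof -
  have "tr_adj_mult V (kraus (copyU V) \<beta> 0) =
      cnj (V 0 0) * \<beta> 0 + cnj (V 1 0) * V 1 0 * \<beta> 1 + cnj (V 1 1) * V 1 1 * \<beta> 0"
    unfolding tr_adj_mult_def by (simp add: kraus_copyU algebra_simps)
  then show ?thesis
    unfolding cnj_mult_self qubit_unitary_norms(3)[OF assms] by (simp add: algebra_simps)
qed

lemma norm_square_mix_expansion:
  fixes w y z :: complex and c :: real
  shows "(cmod (of_real (2 * (1 - c)) * y + of_real c * (w + z)))\<^sup>2 / 4 =
    (cmod y)\<^sup>2 - c * ((cmod (z - y))\<^sup>2 - c / 4 * (cmod (z + w - 2 * y))\<^sup>2)
    - c * ((cmod y)\<^sup>2 - (cmod z)\<^sup>2) - c * (Re (y * cnj z) - Re (w * cnj y))"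
  by (simp only: cmod_power2) (simp add: power2_eq_square field_simps; algebra)

lemma sums_norm_square_mix:
  fixes \<beta> :: "nat \<Rightarrow> complex" and c :: real
  assumes "(\<lambda>n. (cmod (\<beta> n))\<^sup>2) sums s"
  shows "(\<lambda>m. (cmod (of_real (2 * (1 - c)) * \<beta> (Suc m) + of_real c * (\<beta> m + \<beta> (Suc (Suc m)))))\<^sup>2 / 4)
    sums (s - (cmod (\<beta> 0))\<^sup>2 - c * (cmod (\<beta> 1))\<^sup>2 + c * Re (\<beta> 0 * cnj (\<beta> 1))
          - c * (\<Sum>\<^sub>\<infinity>n\<in>{1..}. finite_difference_term c \<beta> n))"
proof -
  define a p where "a = (\<lambda>n. (cmod (\<beta> n))\<^sup>2)" and "p = (\<lambda>n. Re (\<beta> n * cnj (\<beta> (Suc n))))"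
  define S where "S = (\<Sum>\<^sub>\<infinity>n\<in>{1..}. finite_difference_term c \<beta> n)"
  have l2: "square_summable \<beta>"
    using assms unfolding square_summable_def by (rule sums_summable)
  have a_lim: "a \<longlonglongrightarrow> 0"
    using l2 unfolding square_summable_def a_def by (rule summable_LIMSEQ_zero)
  have \<beta>_lim: "\<beta> \<longlonglongrightarrow> 0"
    using l2 by (rule square_summable_LIMSEQ_zero)
  have p_lim: "p \<longlonglongrightarrow> 0"
    using tendsto_Re[OF tendsto_mult[OF \<beta>_lim tendsto_cnj[OF LIMSEQ_Suc[OF \<beta>_lim]]]]
    by (simp add: p_def)
  have tail: "(\<lambda>m. a (Suc m)) sums (s - a 0)"
    using assms by (subst sums_Suc_iff) (simp add: a_def)
  have telescope_a: "(\<lambda>m. a (Suc m) - a (Suc (Suc m))) sums (a 1 - 0)"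
    using telescope_sums'[OF LIMSEQ_Suc[OF a_lim]] by simp
  have telescope_p: "(\<lambda>m. p (Suc m) - p m) sums (0 - p 0)"
    by (rule telescope_sums[OF p_lim])
  have differences: "(\<lambda>m. finite_difference_term c \<beta> (Suc m)) sums S"
    unfolding S_def infsum_finite_difference_term[OF l2]
    using summable_finite_difference_term[OF l2] by (rule summable_sums[OF summable_norm_cancel])
  have expansion: "(cmod (of_real (2 * (1 - c)) * \<beta> (Suc m) + of_real c * (\<beta> m + \<beta> (Suc (Suc m)))))\<^sup>2 / 4
      = a (Suc m) - c * finite_difference_term c \<beta> (Suc m) - c * (a (Suc m) - a (Suc (Suc m)))
        - c * (p (Suc m) - p m)" for m
    using norm_square_mix_expansion[of c "\<beta> (Suc m)" "\<beta> m" "\<beta> (Suc (Suc m))"]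
    by (simp add: finite_difference_term_def a_def p_def)
  have "(\<lambda>m. (cmod (of_real (2 * (1 - c)) * \<beta> (Suc m) + of_real c * (\<beta> m + \<beta> (Suc (Suc m)))))\<^sup>2 / 4)
      sums ((s - a 0) - c * S - c * (a 1 - 0) - c * (0 - p 0))"
    unfolding expansion by (intro sums_diff sums_mult tail differences telescope_a telescope_p)
  moreover have "(s - a 0) - c * S - c * (a 1 - 0) - c * (0 - p 0) =
      s - (cmod (\<beta> 0))\<^sup>2 - c * (cmod (\<beta> 1))\<^sup>2 + c * Re (\<beta> 0 * cnj (\<beta> 1)) - c * S"
    by (simp add: a_def p_def algebra_simps)
  ultimately show ?thesis
    unfolding S_def by (simp only:)
qed

theorem mainTheorem5:
  fixes V :: "nat \<Rightarrow> nat \<Rightarrow> complex" and \<beta> :: "nat \<Rightarrow> complex"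
  assumes "qubit_unitary V"
    and "((\<lambda>n. (cmod (\<beta> n))^2) has_sum 1) UNIV"
  shows "choi_infidelity (kraus (copyU V) \<beta>) V =
           (cmod (V 0 1))^2 *
             (\<Sum>\<^sub>\<infinity>n\<in>{1..}. (cmod (\<beta> (n+1) - \<beta> n))^2
                 - (cmod (V 0 1))^2 / 4 * (cmod (\<beta> (n+1) + \<beta> (n-1) - 2 * \<beta> n))^2)
           + Delta (\<beta> 0) (\<beta> 1) V"
proof -
  define c where "c = (cmod (V 0 1))\<^sup>2"
  define t where "t = (\<lambda>n. (cmod (tr_adj_mult V (kraus (copyU V) \<beta> n)))\<^sup>2)"
  define S where "S = (\<Sum>\<^sub>\<infinity>n\<in>{1..}. finite_difference_term c \<beta> n)"
  define r where "r = 1 - (cmod (\<beta> 0))\<^sup>2 - c * (cmod (\<beta> 1))\<^sup>2 + c * Re (\<beta> 0 * cnj (\<beta> 1)) - c * S"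
  have "(\<lambda>m. t (Suc m) / 4) sums r"
    using sums_norm_square_mix[OF has_sum_imp_sums[OF assms(2)], of c]
    unfolding t_def tr_adj_mult_kraus_copyU_Suc[OF assms(1)] c_def r_def S_def .
  then have "t sums (4 * r + t 0)"
    using sums_mult[of "\<lambda>m. t (Suc m) / 4" r 4] by (simp add: sums_Suc_iff)
  then have "(\<Sum>\<^sub>\<infinity>n. t n) = 4 * r + t 0"
    by (intro infsumI sums_nonneg_imp_has_sum) (simp_all add: t_def)
  moreover have "t 0 = (cmod (\<beta> 0 * (cnj (V 0 0) + complex_of_real ((cmod (V 1 1))\<^sup>2))
      + \<beta> 1 * complex_of_real ((cmod (V 0 1))\<^sup>2)))\<^sup>2"
    unfolding t_def tr_adj_mult_kraus_copyU_0[OF assms(1)] ..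
  moreover have "S = (\<Sum>\<^sub>\<infinity>n\<in>{1..}. (cmod (\<beta> (n+1) - \<beta> n))^2
      - (cmod (V 0 1))^2 / 4 * (cmod (\<beta> (n+1) + \<beta> (n-1) - 2 * \<beta> n))^2)"
    unfolding S_def finite_difference_term_def c_def ..
  ultimately show ?thesis
    unfolding choi_infidelity_def Delta_def t_def[symmetric] by (simp add: r_def c_def algebra_simps)
qed

end
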